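(* Let $\mathcal{C}$ be a CD-category with a normalisation structure $\mathrm{nrm}$ and cancellative comparators. For all maps $f\colon A\to B$ and $h\colon B\to C$, one has $\mathrm{nrm}\big(h\circ\mathrm{nrm}(f)\big)=\mathrm{nrm}(h\circ f)$; i.e. a normalisation box nested inside another normalisation box can be removed.
   Context: A CD-category is a symmetric monoidal category (unit $I$) in which every object $X$ carries a copy map $\Delta_X\colon X\to X\otimes X$ and a discard map $!_X\colon X\to I$ forming a commutative comonoid, compatibly with $\otimes$. A map $f$ is a channel if $!\circ f=\,!$. The domain of $f\colon X\to Y$ is $\mathrm{dom}(f)=\,!_Y\circ f$; $g$ is a normalisation of $f$ if $f=(\mathrm{dom}(f)\otimes g)\circ\Delta_X$; $f$ is normalised if it is a normalisation of itself. A normalisation structure assigns to every $f\colon X\to Y$ a normalised map $\mathrm{nrm}(f)\colon X\to Y$ that is a normalisation of $f$, such that $\mathrm{nrm}(f\otimes g)=\mathrm{nrm}(f)\otimes\mathrm{nrm}(g)$, $\mathrm{nrm}(h\circ f)=h\circ\mathrm{nrm}(f)$ for every channel $h$, $\mathrm{nrm}(f\circ(\mathrm{id}\otimes !))=\mathrm{nrm}(f)\circ(\mathrm{id}\otimes !)$, $\mathrm{nrm}(f\circ\Delta)=\mathrm{nrm}(f)\circ\Delta$, and $\mathrm{nrm}(f)=f$ when $f$ is normalised. A comparator structure assigns to each $X$ a map $\nabla_X\colon X\otimes X\to X$ that is commutative, associative, compatible with $\otimes$ and satisfies $\nabla\circ\Delta=\mathrm{id}$ and $(\nabla\otimes\mathrm{id})\circ(\mathrm{id}\otimes\Delta)=\Delta\circ\nabla=(\mathrm{id}\otimes\nabla)\circ(\Delta\otimes\mathrm{id})$.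 With $\cap_X=\,!_X\circ\nabla_X$, comparators are cancellative if for $f,g\colon A\to Y\otimes Z$, $(\cap_Y\otimes\mathrm{id}_Z)\circ(\mathrm{id}_Y\otimes f)=(\cap_Y\otimes\mathrm{id}_Z)\circ(\mathrm{id}_Y\otimes g)$ implies $f=g$. *)

theory Defs
  imports Main
begin

text \<open>Categories given by a set of arrows with domain, codomain, (partial) composition
  and identities; objects are all elements of the type 'o.
  Composition: g \<cdot> f means "g after f".\<close>

locale category =
  fixes Arr :: "'m set" and Dom :: "'m \<Rightarrow> 'o" and Cod :: "'m \<Rightarrow> 'o"
    and comp :: "'m \<Rightarrow> 'm \<Rightarrow> 'm" (infixr "\<cdot>" 55)
    and Id :: "'o \<Rightarrow> 'm"
  assumes Id_arr: "Id A \<in> Arr" "Dom (Id A) = A" "Cod (Id A) = A"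
    and comp_arr: "\<lbrakk>f \<in> Arr; g \<in> Arr; Cod f = Dom g\<rbrakk>
        \<Longrightarrow> g \<cdot> f \<in> Arr \<and> Dom (g \<cdot> f) = Dom f \<and> Cod (g \<cdot> f) = Cod g"
    and comp_IdL: "f \<in> Arr \<Longrightarrow> Id (Cod f) \<cdot> f = f"
    and comp_IdR: "f \<in> Arr \<Longrightarrow> f \<cdot> Id (Dom f) = f"
    and comp_assoc: "\<lbrakk>f \<in> Arr; g \<in> Arr; h \<in> Arr; Cod f = Dom g; Cod g = Dom h\<rbrakk>
        \<Longrightarrow> (h \<cdot> g) \<cdot> f = h \<cdot> (g \<cdot> f)"
begin
definition hom :: "'o \<Rightarrow> 'o \<Rightarrow> 'm set" where
  "hom A B = {f \<in> Arr. Dom f = A \<and> Cod f = B}"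
end

locale smc = category +
  fixes T (infixr "\<otimes>" 70)
    and TO (infixr "\<boxtimes>" 70)
    and I
    and as and as'
    and lu and lu'
    and ru and ru'
    and sw
  assumes T_arr: "\<lbrakk>f \<in> Arr; g \<in> Arr\<rbrakk> \<Longrightarrow>
        f \<otimes> g \<in> Arr \<and> Dom (f \<otimes> g) = Dom f \<boxtimes> Dom g \<and> Cod (f \<otimes> g) = Cod f \<boxtimes> Cod g"
    and T_Id: "Id A \<otimes> Id B = Id (A \<boxtimes> B)"
    and T_comp: "\<lbrakk>f \<in> Arr; g \<in> Arr; f' \<in> Arr; g' \<in> Arr; Cod f = Dom g; Cod f' = Dom g'\<rbrakk>
        \<Longrightarrow> (g \<cdot> f) \<otimes> (g' \<cdot> f') = (g \<otimes> g') \<cdot> (f \<otimes> f')"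
    and as_hom: "as X Y Z \<in> hom ((X \<boxtimes> Y) \<boxtimes> Z) (X \<boxtimes> (Y \<boxtimes> Z))"
    and as'_hom: "as' X Y Z \<in> hom (X \<boxtimes> (Y \<boxtimes> Z)) ((X \<boxtimes> Y) \<boxtimes> Z)"
    and as_inv: "as' X Y Z \<cdot> as X Y Z = Id ((X \<boxtimes> Y) \<boxtimes> Z)"
                "as X Y Z \<cdot> as' X Y Z = Id (X \<boxtimes> (Y \<boxtimes> Z))"
    and as_nat: "\<lbrakk>f \<in> Arr; g \<in> Arr; h \<in> Arr\<rbrakk> \<Longrightarrow>
        as (Cod f) (Cod g) (Cod h) \<cdot> ((f \<otimes> g) \<otimes> h) = (f \<otimes> (g \<otimes> h)) \<cdot> as (Dom f) (Dom g) (Dom h)"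
    and lu_hom: "lu X \<in> hom (I \<boxtimes> X) X" and lu'_hom: "lu' X \<in> hom X (I \<boxtimes> X)"
    and lu_inv: "lu' X \<cdot> lu X = Id (I \<boxtimes> X)" "lu X \<cdot> lu' X = Id X"
    and lu_nat: "f \<in> Arr \<Longrightarrow> lu (Cod f) \<cdot> (Id I \<otimes> f) = f \<cdot> lu (Dom f)"
    and ru_hom: "ru X \<in> hom (X \<boxtimes> I) X" and ru'_hom: "ru' X \<in> hom X (X \<boxtimes> I)"
    and ru_inv: "ru' X \<cdot> ru X = Id (X \<boxtimes> I)" "ru X \<cdot> ru' X = Id X"
    and ru_nat: "f \<in> Arr \<Longrightarrow> ru (Cod f) \<cdot> (f \<otimes> Id I) = f \<cdot> ru (Dom f)"
    and sw_hom: "sw X Y \<in> hom (X \<boxtimes> Y) (Y \<boxtimes> X)"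
    and sw_inv: "sw Y X \<cdot> sw X Y = Id (X \<boxtimes> Y)"
    and sw_nat: "\<lbrakk>f \<in> Arr; g \<in> Arr\<rbrakk> \<Longrightarrow>
        sw (Cod f) (Cod g) \<cdot> (f \<otimes> g) = (g \<otimes> f) \<cdot> sw (Dom f) (Dom g)"
    and pentagon: "as W X (Y \<boxtimes> Z) \<cdot> as (W \<boxtimes> X) Y Z
        = (Id W \<otimes> as X Y Z) \<cdot> as W (X \<boxtimes> Y) Z \<cdot> (as W X Y \<otimes> Id Z)"
    and triangle: "(Id X \<otimes> lu Y) \<cdot> as X I Y = ru X \<otimes> Id Y"
    and hexagon: "as Y Z X \<cdot> sw X (Y \<boxtimes> Z) \<cdot> as X Y Z
        = (Id Y \<otimes> sw X Z) \<cdot> as Y X Z \<cdot> (sw X Y \<otimes> Id Z)"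
begin
text \<open>The canonical middle-interchange (A\<otimes>B)\<otimes>(C\<otimes>D) \<rightarrow> (A\<otimes>C)\<otimes>(B\<otimes>D).\<close>
definition mid where
  "mid A B C D = as' A C (B \<boxtimes> D) \<cdot> (Id A \<otimes> (as C B D \<cdot> (sw B C \<otimes> Id D) \<cdot> as' B C D))
                  \<cdot> as A B (C \<boxtimes> D)"
end

locale cd_category = smc +
  fixes cp and dc
  assumes cp_hom: "cp X \<in> hom X (X \<boxtimes> X)"
    and dc_hom: "dc X \<in> hom X I"
    and counitL: "lu X \<cdot> (dc X \<otimes> Id X) \<cdot> cp X = Id X"
    and counitR: "ru X \<cdot> (Id X \<otimes> dc X) \<cdot> cp X = Id X"
    and coassoc: "as X X X \<cdot> (cp X \<otimes> Id X) \<cdot> cp X = (Id X \<otimes> cp X) \<cdot> cp X"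
    and cocomm: "sw X X \<cdot> cp X = cp X"
    and cp_tensor: "cp (X \<boxtimes> Y) = mid X X Y Y \<cdot> (cp X \<otimes> cp Y)"
    and dc_tensor: "dc (X \<boxtimes> Y) = lu I \<cdot> (dc X \<otimes> dc Y)"
    and cp_unit: "lu I \<cdot> cp I = Id I"
    and dc_unit: "dc I = Id I"
begin

definition channel where
  "channel f \<longleftrightarrow> f \<in> Arr \<and> dc (Cod f) \<cdot> f = dc (Dom f)"

definition domn where
  "domn f = dc (Cod f) \<cdot> f"

definition normalisation_of where
  "normalisation_of g f \<longleftrightarrow> f \<in> Arr \<and> g \<in> Arr \<and> Dom g = Dom f \<and> Cod g = Cod f \<and>
      f = lu (Cod f) \<cdot> (domn f \<otimes> g) \<cdot> cp (Dom f)"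

definition normalised where
  "normalised f \<longleftrightarrow> normalisation_of f f"

end

locale normalisation_structure = cd_category +
  fixes nrm
  assumes nrm_normalisation: "f \<in> Arr \<Longrightarrow> normalised (nrm f) \<and> normalisation_of (nrm f) f"
    and nrm_tensor: "\<lbrakk>f \<in> Arr; g \<in> Arr\<rbrakk> \<Longrightarrow> nrm (f \<otimes> g) = nrm f \<otimes> nrm g"
    and nrm_channel: "\<lbrakk>f \<in> Arr; channel h; Dom h = Cod f\<rbrakk> \<Longrightarrow> nrm (h \<cdot> f) = h \<cdot> nrm f"
    and nrm_discard: "\<lbrakk>f \<in> Arr; Dom f = X \<boxtimes> I\<rbrakk> \<Longrightarrow>
        nrm (f \<cdot> (Id X \<otimes> dc Z)) = nrm f \<cdot> (Id X \<otimes> dc Z)"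
    and nrm_copy: "\<lbrakk>f \<in> Arr; Dom f = X \<boxtimes> X\<rbrakk> \<Longrightarrow> nrm (f \<cdot> cp X) = nrm f \<cdot> cp X"
    and nrm_normalised: "\<lbrakk>f \<in> Arr; normalised f\<rbrakk> \<Longrightarrow> nrm f = f"

locale comparator_structure = cd_category +
  fixes cmp
  assumes cmp_hom: "cmp X \<in> hom (X \<boxtimes> X) X"
    and cmp_comm: "cmp X \<cdot> sw X X = cmp X"
    and cmp_assoc: "cmp X \<cdot> (cmp X \<otimes> Id X) = cmp X \<cdot> (Id X \<otimes> cmp X) \<cdot> as X X X"
    and cmp_tensor: "cmp (X \<boxtimes> Y) = (cmp X \<otimes> cmp Y) \<cdot> mid X Y X Y"
    and cmp_cp: "cmp X \<cdot> cp X = Id X"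
    and cmp_frobL: "(cmp X \<otimes> Id X) \<cdot> as' X X X \<cdot> (Id X \<otimes> cp X) = cp X \<cdot> cmp X"
    and cmp_frobR: "cp X \<cdot> cmp X = (Id X \<otimes> cmp X) \<cdot> as X X X \<cdot> (cp X \<otimes> Id X)"
begin
definition cap where
  "cap X = dc X \<cdot> cmp X"
end

locale cd_nrm_cmp = normalisation_structure + comparator_structure +
  assumes cancellative: "\<lbrakk>f \<in> Arr; g \<in> Arr; Dom f = A; Dom g = A;
        Cod f = Y \<boxtimes> Z; Cod g = Y \<boxtimes> Z;
        (cap Y \<otimes> Id Z) \<cdot> as' Y Y Z \<cdot> (Id Y \<otimes> f) = (cap Y \<otimes> Id Z) \<cdot> as' Y Y Z \<cdot> (Id Y \<otimes> g)\<rbrakk>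
        \<Longrightarrow> f = g"

end

theory Submission
  imports Defs
begin

(* For an effect k : A \<rightarrow> I and g : A \<rightarrow> B write k\<bullet>g for (k \<otimes> g) \<circ> \<Delta>, so that g normalises f
   iff f = dom(f)\<bullet>g. Post-composition commutes with scaling, h \<circ> (k\<bullet>g) = k\<bullet>(h \<circ> g), and the
   axioms for nrm (tensor, the channel \<lambda>, copy) give nrm(k\<bullet>g) = nrm(k)\<bullet>nrm(g). Applied to
   f = dom(f)\<bullet>nrm(f) the latter shows nrm f = e\<bullet>nrm(f) with e = nrm(dom f); hence h \<circ> f and
   h \<circ> nrm f are d\<bullet>(h \<circ> nrm f) and e\<bullet>(h \<circ> nrm f) for d = dom f, and both normalise to
   e\<bullet>nrm(h \<circ> nrm f). *)

context cd_category
begin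

lemma comp_simps [simp]:
  assumes "f \<in> Arr" "g \<in> Arr" "Cod f = Dom g"
  shows "g \<cdot> f \<in> Arr" "Dom (g \<cdot> f) = Dom f" "Cod (g \<cdot> f) = Cod g"
  using comp_arr[OF assms] by auto

lemma tensor_simps [simp]:
  assumes "f \<in> Arr" "g \<in> Arr"
  shows "f \<otimes> g \<in> Arr" "Dom (f \<otimes> g) = Dom f \<boxtimes> Dom g" "Cod (f \<otimes> g) = Cod f \<boxtimes> Cod g"
  using T_arr[OF assms] by auto

lemma cp_simps [simp]: "cp X \<in> Arr" "Dom (cp X) = X" "Cod (cp X) = X \<boxtimes> X"
  using cp_hom unfolding hom_def by auto

lemma dc_simps [simp]: "dc X \<in> Arr" "Dom (dc X) = X" "Cod (dc X) = I"
  using dc_hom unfolding hom_def by auto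

lemma lu_simps [simp]: "lu X \<in> Arr" "Dom (lu X) = I \<boxtimes> X" "Cod (lu X) = X"
  using lu_hom unfolding hom_def by auto

lemma channel_lu: "channel (lu X)"
proof -
  have "dc (I \<boxtimes> X) = lu I \<cdot> (Id I \<otimes> dc X)" using dc_tensor dc_unit by simp
  also have "\<dots> = dc X \<cdot> lu X" using lu_nat[of "dc X"] by simp
  finally show ?thesis unfolding channel_def by simp
qed

(* The paper's (k \<otimes> g) \<circ> \<Delta>; the unitor is explicit since the monoidal structure is not strict. *)
definition scale where
  "scale k g = lu (Cod g) \<cdot> (k \<otimes> g) \<cdot> cp (Dom g)"

lemma normalisation_of_iff_scale:
  "normalisation_of g f \<longleftrightarrow>
     f \<in> Arr \<and> g \<in> Arr \<and> Dom g = Dom f \<and> Cod g = Cod f \<and> f = scale (domn f) g"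
  unfolding normalisation_of_def scale_def by auto

lemma comp_scale:
  assumes k: "k \<in> Arr" "Dom k = A" "Cod k = I"
    and g: "g \<in> Arr" "Dom g = A" "Cod g = B"
    and h: "h \<in> Arr" "Dom h = B"
  shows "h \<cdot> scale k g = scale k (h \<cdot> g)"
proof -
  have "h \<cdot> scale k g = (h \<cdot> lu B) \<cdot> (k \<otimes> g) \<cdot> cp A"
    unfolding scale_def using comp_assoc[of "(k \<otimes> g) \<cdot> cp A" "lu B" h] k g h by simp
  also have "h \<cdot> lu B = lu (Cod h) \<cdot> (Id I \<otimes> h)" using lu_nat[OF h(1)] h by simp
  also have "(lu (Cod h) \<cdot> (Id I \<otimes> h)) \<cdot> (k \<otimes> g) \<cdot> cp A
      = lu (Cod h) \<cdot> ((Id I \<otimes> h) \<cdot> (k \<otimes> g)) \<cdot> cp A"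
    using comp_assoc[of "(k \<otimes> g) \<cdot> cp A" "Id I \<otimes> h" "lu (Cod h)"]
      comp_assoc[of "cp A" "k \<otimes> g" "Id I \<otimes> h"] k g h Id_arr by simp
  also have "(Id I \<otimes> h) \<cdot> (k \<otimes> g) = k \<otimes> (h \<cdot> g)"
    using T_comp[of k "Id I" g h] comp_IdL[OF k(1)] k g h Id_arr by simp
  finally show ?thesis unfolding scale_def using k g h by simp
qed

end

context normalisation_structure
begin

lemma nrm_simps [simp]:
  assumes "f \<in> Arr"
  shows "nrm f \<in> Arr" "Dom (nrm f) = Dom f" "Cod (nrm f) = Cod f"
  using nrm_normalisation[OF assms] unfolding normalisation_of_def by auto

lemma scale_domn_nrm:
  assumes "f \<in> Arr"
  shows "f = scale (domn f) (nrm f)"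
  using nrm_normalisation[OF assms] unfolding normalisation_of_iff_scale by auto

lemma nrm_nrm:
  assumes "f \<in> Arr"
  shows "nrm (nrm f) = nrm f"
  using nrm_normalisation[OF assms] nrm_normalised by (simp add: assms)

lemma nrm_scale:
  assumes k: "k \<in> Arr" "Dom k = A" "Cod k = I"
    and g: "g \<in> Arr" "Dom g = A" "Cod g = B"
  shows "nrm (scale k g) = scale (nrm k) (nrm g)"
proof -
  have "nrm (scale k g) = nrm ((lu B \<cdot> (k \<otimes> g)) \<cdot> cp A)"
    unfolding scale_def using comp_assoc[of "cp A" "k \<otimes> g" "lu B"] k g by simp
  also have "\<dots> = nrm (lu B \<cdot> (k \<otimes> g)) \<cdot> cp A"
    using nrm_copy[of "lu B \<cdot> (k \<otimes> g)" A] k g by simp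
  also have "nrm (lu B \<cdot> (k \<otimes> g)) = lu B \<cdot> (nrm k \<otimes> nrm g)"
    using nrm_channel[of "k \<otimes> g" "lu B"] channel_lu nrm_tensor k g by simp
  finally show ?thesis
    unfolding scale_def using comp_assoc[of "cp A" "nrm k \<otimes> nrm g" "lu B"] k g by simp
qed

lemma nrm_absorbs_nrm_domn:
  assumes "f \<in> Arr"
  shows "nrm f = scale (nrm (domn f)) (nrm f)"
proof -
  have domn: "domn f \<in> Arr" "Dom (domn f) = Dom f" "Cod (domn f) = I"
    unfolding domn_def using assms by simp_all
  have "nrm f = nrm (scale (domn f) (nrm f))" using scale_domn_nrm[OF assms] by (rule arg_cong)
  also have "\<dots> = scale (nrm (domn f)) (nrm f)"
    using nrm_scale[OF domn] nrm_nrm assms by simp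
  finally show ?thesis .
qed

lemma nrm_comp_nrm:
  assumes f: "f \<in> Arr" and h: "h \<in> Arr" "Cod f = Dom h"
  shows "nrm (h \<cdot> nrm f) = nrm (h \<cdot> f)"
proof -
  define d e n where "d = domn f" "e = nrm d" "n = nrm f"
  have d: "d \<in> Arr" "Dom d = Dom f" "Cod d = I"
    unfolding d_e_n_def domn_def using f by simp_all
  have e: "e \<in> Arr" "Dom e = Dom f" "Cod e = I" "nrm e = e"
    unfolding d_e_n_def(2) using d nrm_nrm by simp_all
  have n: "n \<in> Arr" "Dom n = Dom f" "Cod n = Cod f"
    unfolding d_e_n_def using f by simp_all
  have hn: "h \<cdot> n \<in> Arr" "Dom (h \<cdot> n) = Dom f"
    using n h by simp_all
  have "h \<cdot> n = h \<cdot> scale e n"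
    using nrm_absorbs_nrm_domn[OF f] unfolding d_e_n_def by (rule arg_cong)
  also have "\<dots> = scale e (h \<cdot> n)"
    using comp_scale[OF e(1-3) n] h by simp
  finally have "h \<cdot> n = scale e (h \<cdot> n)" .
  then have "nrm (h \<cdot> n) = nrm (scale e (h \<cdot> n))" by (rule arg_cong)
  also have "\<dots> = scale e (nrm (h \<cdot> n))"
    using nrm_scale[OF e(1-3) hn] e(4) by simp
  also have "\<dots> = nrm (scale d (h \<cdot> n))"
    using nrm_scale[OF d hn] unfolding d_e_n_def by simp
  also have "scale d (h \<cdot> n) = h \<cdot> scale d n"
    using comp_scale[OF d n] h by simp
  also have "\<dots> = h \<cdot> f"
    unfolding d_e_n_def by (rule arg_cong[OF scale_domn_nrm[OF f, symmetric]])
  finally show ?thesis unfolding d_e_n_def .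
qed

end

theorem lemma3p3:
  fixes Arr :: "'m set" and Dom Cod :: "'m \<Rightarrow> 'o"
    and cmps :: "'m \<Rightarrow> 'm \<Rightarrow> 'm" and idm :: "'o \<Rightarrow> 'm"
    and tens :: "'m \<Rightarrow> 'm \<Rightarrow> 'm" and tenso :: "'o \<Rightarrow> 'o \<Rightarrow> 'o" and unit :: 'o
    and as as' :: "'o \<Rightarrow> 'o \<Rightarrow> 'o \<Rightarrow> 'm" and lu lu' ru ru' :: "'o \<Rightarrow> 'm"
    and sw :: "'o \<Rightarrow> 'o \<Rightarrow> 'm" and cp dc :: "'o \<Rightarrow> 'm"
    and nrm :: "'m \<Rightarrow> 'm" and cmp :: "'o \<Rightarrow> 'm"
    and f h :: 'm
  assumes "cd_nrm_cmp Arr Dom Cod cmps idm tens tenso unit as as' lu lu' ru ru' sw cp dc nrm cmp"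
    and "f \<in> Arr" and "h \<in> Arr" and "Cod f = Dom h"
  shows "nrm (cmps h (nrm f)) = nrm (cmps h f)"
proof -
  interpret cd_nrm_cmp Arr Dom Cod cmps idm tens tenso unit as as' lu lu' ru ru' sw cp dc nrm cmp
    by (fact assms(1))
  show ?thesis using nrm_comp_nrm assms(2-4) by blast
qed

end
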